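(* Let $\Phi:S_{m,n}\to S_{m',n'}$ be an affine isomorphism. Let $\omega_1\ne\omega_2$ be pure states in $K_m$ and $\sigma_1\neq\sigma_2$ pure states in $K_n$. Then there do not exist pure states $\rho_1,\rho_2,\rho_3\in\partial_eK_{m'}$ and $\tau_1,\tau_2,\tau_3\in\partial_eK_{n'}$ such that simultaneously $\Phi(\omega_1\otimes\sigma_1)=\rho_1\otimes\tau_1$, $\Phi(\omega_1\otimes\sigma_2)=\rho_1\otimes\tau_2$, $\Phi(\omega_2\otimes\sigma_1)=\rho_2\otimes\tau_3$, and $\Phi(\omega_2\otimes\sigma_2)=\rho_3\otimes\tau_3$.
   Context: $K_p$ denotes the state space of $\mathcal{B}(\mathbb{C}^p)$; $K_{m,n}$ the state space of $\mathcal{B}(\mathbb{C}^m\otimes\mathbb{C}^n)\cong\mathcal{B}(\mathbb{C}^m)\otimes\mathcal{B}(\mathbb{C}^n)$; $S_{m,n}\subseteq K_{m,n}$ the convex set of separable states (convex combinations of product states $\omega\otimes\sigma$, $\omega\in K_m$, $\sigma\in K_n$). $\partial_eC$ denotes the set of extreme points of a convex set $C$. An affine isomorphism is a bijection preserving convex combinations. *)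

theory Defs
  imports "HOL-Analysis.Analysis"
begin

text \<open>Complex p x p matrices, p = CARD('p), are modelled as complex^'p^'p.
  States of B(C^p) are identified with density matrices.\<close>

definition psd_mat :: "complex^'p^'p \<Rightarrow> bool" where
  "psd_mat A \<longleftrightarrow> (\<forall>v::complex^'p.
     let q = (\<Sum>i\<in>UNIV. \<Sum>j\<in>UNIV. cnj (v$i) * A$i$j * v$j) in Im q = 0 \<and> Re q \<ge> 0)"

definition mat_trace :: "complex^'p^'p \<Rightarrow> complex" where
  "mat_trace A = (\<Sum>i\<in>UNIV. A$i$i)"

definition state_space :: "(complex^'p^'p) set" where
  "state_space = {A. psd_mat A \<and> mat_trace A = 1}"

definition kron :: "complex^'m^'m \<Rightarrow> complex^'n^'n \<Rightarrow> complex^('m \<times> 'n)^('m \<times> 'n)" where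
  "kron A B = (\<chi> a b. A$(fst a)$(fst b) * B$(snd a)$(snd b))"

definition separable_states :: "(complex^('m::finite \<times> 'n::finite)^('m \<times> 'n)) set" where
  "separable_states = convex hull {kron \<omega> \<sigma> | \<omega> \<sigma>.
      \<omega> \<in> (state_space :: (complex^'m^'m) set) \<and> \<sigma> \<in> (state_space :: (complex^'n^'n) set)}"

definition pure_state :: "complex^'p^'p \<Rightarrow> bool" where
  "pure_state \<omega> \<longleftrightarrow> \<omega> extreme_point_of (state_space :: (complex^'p^'p) set)"

definition affine_iso :: "('a::real_vector \<Rightarrow> 'b::real_vector) \<Rightarrow> 'a set \<Rightarrow> 'b set \<Rightarrow> bool" where
  "affine_iso f S T \<longleftrightarrow> bij_betw f S T \<and>
     (\<forall>x\<in>S. \<forall>y\<in>S. \<forall>t::real. 0 \<le> t \<and> t \<le> 1 \<longrightarrow>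
        f ((1 - t) *\<^sub>R x + t *\<^sub>R y) = (1 - t) *\<^sub>R f x + t *\<^sub>R f y)"

end

theory Submission
  imports Defs
begin

(* For a convex set S and points a, b of S call the segment [a,b] a
   face at its midpoint (segment_face S a b) if every point of S occurring in a
   proper convex decomposition of midpoint a b already lies on [a,b].  This notion
   is defined purely in terms of convex combinations, hence is preserved and
   reflected by affine isomorphisms.  For pure states w, w' of K_m and s, s' of K_n
   with (w,s) <> (w',s') we show, inside the separable states S_{m,n}:
     segment_face S (w(x)s) (w'(x)s')  <->  w <> w' and s <> s'.
   "<-" holds because a separable state decomposing the midpoint is annihilated by
   all product vectors x(x)y with x, y in the kernels of w, s' (or of w', s), which
   forces every product summand to be w(x)s or w'(x)s'.  For "->", if say w = w',
   the midpoint of s and s' has a decomposition into states off the segment [s,s']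
   (the segment is a chord of a Bloch sphere), which lifts to the products.  Consequently an
   affine isomorphism maps pure products with both factors different to pure
   products with both factors different; applied to the four prescribed values
   this forces rho1 = rho2 and rho1 <> rho2 at the same time. *)

section \<open>Sesquilinear forms of matrices\<close>

definition sesq :: "complex^'p \<Rightarrow> complex^'p^'p \<Rightarrow> complex^'p \<Rightarrow> complex" where
  "sesq x A y = (\<Sum>i\<in>UNIV. \<Sum>j\<in>UNIV. cnj (x$i) * A$i$j * y$j)"

lemma psd_iff: "psd_mat A \<longleftrightarrow> (\<forall>v. Im (sesq v A v) = 0 \<and> Re (sesq v A v) \<ge> 0)"
  unfolding psd_mat_def sesq_def Let_def by simp

lemma sesq_add_left: "sesq (x + y) A z = sesq x A z + sesq y A z"
  unfolding sesq_def by (simp add: algebra_simps sum.distrib)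
lemma sesq_add_right: "sesq z A (x + y) = sesq z A x + sesq z A y"
  unfolding sesq_def by (simp add: algebra_simps sum.distrib)
lemma sesq_diff_left: "sesq (x - y) A z = sesq x A z - sesq y A z"
  unfolding sesq_def by (simp add: algebra_simps sum_subtractf)
lemma sesq_diff_right: "sesq z A (x - y) = sesq z A x - sesq z A y"
  unfolding sesq_def by (simp add: algebra_simps sum_subtractf)
lemma sesq_smult_left: "sesq (c *s x) A z = cnj c * sesq x A z"
  unfolding sesq_def by (simp add: algebra_simps sum_distrib_left)
lemma sesq_smult_right: "sesq z A (c *s x) = c * sesq z A x"
  unfolding sesq_def by (simp add: algebra_simps sum_distrib_left)
lemma sesq_mat_add: "sesq x (A + B) y = sesq x A y + sesq x B y"
  unfolding sesq_def by (simp add: algebra_simps sum.distrib)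
lemma sesq_mat_diff: "sesq x (A - B) y = sesq x A y - sesq x B y"
  unfolding sesq_def by (simp add: algebra_simps sum_subtractf)
lemma sesq_scaleR: "sesq x (r *\<^sub>R A) y = of_real r * sesq x A y"
  unfolding sesq_def vector_scaleR_component
  by (simp add: scaleR_conv_of_real algebra_simps sum_distrib_left)

lemma sesq_mat_sum:
  "finite S \<Longrightarrow> sesq w (\<Sum>v\<in>S. u v *\<^sub>R v) w = (\<Sum>v\<in>S. of_real (u v) * sesq w v w)"
proof (induction S rule: finite_induct)
  case empty
  then show ?case by (simp add: sesq_def)
next
  case (insert x F)
  then show ?case by (simp add: sesq_mat_add sesq_scaleR)
qed

lemma sesq_expand:
  "sesq (s *s x + y) A (s *s x + y)
     = cnj s * s * sesq x A x + cnj s * sesq x A y + s * sesq y A x + sesq y A y"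
  by (simp add: sesq_add_left sesq_add_right sesq_smult_left sesq_smult_right algebra_simps)

lemma sesq_axis_right: "sesq x A (axis j 1) = (\<Sum>k\<in>UNIV. cnj (x$k) * A$k$j)"
proof -
  have "(\<Sum>l\<in>UNIV. cnj (x$k) * A$k$l * axis j 1 $ l)
      = (\<Sum>l\<in>UNIV. if l = j then cnj (x$k) * A$k$l else 0)" for k
    by (rule sum.cong) (auto simp: axis_def)
  then show ?thesis unfolding sesq_def by (simp add: sum.delta')
qed

lemma sesq_axis_left: "sesq (axis i 1) A y = (\<Sum>l\<in>UNIV. A$i$l * y$l)"
proof -
  have "(\<Sum>k\<in>UNIV. \<Sum>l\<in>UNIV. cnj (axis i 1 $ k) * A$k$l * y$l)
      = (\<Sum>k\<in>UNIV. if k = i then (\<Sum>l\<in>UNIV. A$k$l * y$l) else 0)"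
    by (rule sum.cong) (auto simp: axis_def)
  then show ?thesis unfolding sesq_def by (simp add: sum.delta')
qed

lemma sesq_axis_axis: "sesq (axis i 1) A (axis j 1) = A$i$j"
proof -
  have "(\<Sum>l\<in>UNIV. A$i$l * axis j 1 $ l) = (\<Sum>l\<in>UNIV. if l = j then A$i$l else 0)"
    by (rule sum.cong) (auto simp: axis_def)
  then show ?thesis by (simp add: sesq_axis_left)
qed

lemma sesq_hermitian:
  assumes "\<And>i j. A$j$i = cnj (A$i$j)"
  shows "sesq y A x = cnj (sesq x A y)"
proof -
  have "sesq y A x = (\<Sum>j\<in>UNIV. \<Sum>i\<in>UNIV. cnj (y$j) * A$j$i * x$i)" by (simp add: sesq_def)
  also have "\<dots> = (\<Sum>i\<in>UNIV. \<Sum>j\<in>UNIV. cnj (y$j) * A$j$i * x$i)" by (rule sum.swap)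
  also have "\<dots> = (\<Sum>i\<in>UNIV. \<Sum>j\<in>UNIV. cnj (cnj (x$i) * A$i$j * y$j))"
    by (intro sum.cong refl, subst assms[of _ _], simp add: mult_ac)
  also have "\<dots> = cnj (sesq x A y)" by (simp add: sesq_def)
  finally show ?thesis .
qed

lemma trace_scaleR: "mat_trace (r *\<^sub>R A) = of_real r * mat_trace A"
  unfolding mat_trace_def vector_scaleR_component
  by (simp add: scaleR_conv_of_real sum_distrib_left)

section \<open>Positive semidefinite matrices\<close>

definition nonneg_real :: "complex \<Rightarrow> bool" where
  "nonneg_real z \<longleftrightarrow> Im z = 0 \<and> Re z \<ge> 0"

lemma nonneg_real_mult: "nonneg_real a \<Longrightarrow> nonneg_real b \<Longrightarrow> nonneg_real (a * b)"
  by (simp add: nonneg_real_def)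
lemma nonneg_real_scale: "nonneg_real a \<Longrightarrow> r \<ge> 0 \<Longrightarrow> nonneg_real (of_real r * a)"
  by (simp add: nonneg_real_def)
lemma nonneg_real_sum: "(\<And>i. i \<in> S \<Longrightarrow> nonneg_real (f i)) \<Longrightarrow> nonneg_real (sum f S)"
  by (simp add: nonneg_real_def Im_sum Re_sum sum_nonneg)

lemma nonneg_real_sum_zero:
  assumes "finite S" "\<And>i. i \<in> S \<Longrightarrow> nonneg_real (f i)" "sum f S = 0" "i \<in> S"
  shows "f i = 0"
proof -
  have "(\<Sum>i\<in>S. Re (f i)) = 0" using assms(3) by (simp flip: Re_sum)
  then have "Re (f i) = 0" using assms(1,2,4) by (simp add: sum_nonneg_eq_0_iff nonneg_real_def)
  then show ?thesis using assms(2)[OF assms(4)] by (simp add: nonneg_real_def complex_eq_iff)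
qed

lemma nonneg_real_comb_zero:
  assumes "nonneg_real a" "nonneg_real b" "0 < t" "t < 1"
    and "of_real (1 - t) * a + of_real t * b = 0"
  shows "a = 0"
proof -
  have "(1 - t) * Re a + t * Re b = 0" using arg_cong[OF assms(5), of Re] by simp
  moreover have "(1 - t) * Re a \<ge> 0" "t * Re b \<ge> 0" using assms by (simp_all add: nonneg_real_def)
  ultimately have "(1 - t) * Re a = 0" by linarith
  then have "Re a = 0" using assms(4) by simp
  then show ?thesis using assms(1) by (simp add: nonneg_real_def complex_eq_iff)
qed

lemma nonneg_real_line_slope:
  assumes "\<And>r::real. nonneg_real (of_real r * P + c)"
  shows "P = 0"
proof -
  have c: "Im c = 0" using assms[of 0] by (simp add: nonneg_real_def)
  have "Im P = 0" using assms[of 1] c by (simp add: nonneg_real_def)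
  moreover have "Re P = 0"
  proof (rule ccontr)
    assume h: "Re P \<noteq> 0"
    define r where "r = - (\<bar>Re c\<bar> + 1) / Re P"
    have "Re (of_real r * P + c) = r * Re P + Re c" by simp
    also have "\<dots> = - (\<bar>Re c\<bar> + 1) + Re c" using h by (simp add: r_def)
    also have "\<dots> < 0" by linarith
    finally show False using assms[of r] by (simp add: nonneg_real_def)
  qed
  ultimately show ?thesis by (simp add: complex_eq_iff)
qed

lemma psd_nonneg_real: "psd_mat A \<Longrightarrow> nonneg_real (sesq x A x)"
  by (simp add: psd_iff nonneg_real_def)

lemma state_nonneg_real: "A \<in> state_space \<Longrightarrow> nonneg_real (sesq x A x)"
  by (simp add: state_space_def psd_nonneg_real)

text \<open>A null vector of a psd form is orthogonal to everything (polarisation).\<close>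
lemma psd_null_vector:
  assumes psd: "psd_mat A" and null: "sesq x A x = 0"
  shows "sesq x A y = 0 \<and> sesq y A x = 0"
proof -
  have "sesq x A y + sesq y A x = 0"
  proof (rule nonneg_real_line_slope[where c = "sesq y A y"])
    fix r :: real
    have "sesq (of_real r *s x + y) A (of_real r *s x + y)
        = of_real r * (sesq x A y + sesq y A x) + sesq y A y"
      by (simp only: sesq_expand null) (simp add: algebra_simps)
    then show "nonneg_real (of_real r * (sesq x A y + sesq y A x) + sesq y A y)"
      using psd_nonneg_real[OF psd] by metis
  qed
  moreover have "\<i> * (sesq y A x - sesq x A y) = 0"
  proof (rule nonneg_real_line_slope[where c = "sesq y A y"])
    fix r :: real
    have "sesq ((\<i> * of_real r) *s x + y) A ((\<i> * of_real r) *s x + y)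
        = of_real r * (\<i> * (sesq y A x - sesq x A y)) + sesq y A y"
      by (simp only: sesq_expand null) (simp add: algebra_simps)
    then show "nonneg_real (of_real r * (\<i> * (sesq y A x - sesq x A y)) + sesq y A y)"
      using psd_nonneg_real[OF psd] by metis
  qed
  ultimately show ?thesis by (simp add: algebra_simps)
qed

lemma psd_hermitian:
  assumes "psd_mat A"
  shows "A$j$i = cnj (A$i$j)"
proof -
  have p: "\<And>v. Im (sesq v A v) = 0" using assms by (simp add: psd_iff)
  let ?x = "axis i (1::complex)" and ?y = "axis j (1::complex)"
  have d: "\<And>k. Im (A$k$k) = 0" using p[of "axis _ 1"] by (simp add: sesq_axis_axis)
  have "sesq (1 *s ?x + ?y) A (1 *s ?x + ?y) = A$i$i + A$i$j + A$j$i + A$j$j"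
    by (simp only: sesq_expand sesq_axis_axis) simp
  then have 1: "Im (A$i$j) + Im (A$j$i) = 0" using p[of "1 *s ?x + ?y"] d[of i] d[of j] by simp
  have "sesq (1 *s ?x + \<i> *s ?y) A (1 *s ?x + \<i> *s ?y) = A$i$i + \<i> * A$i$j - \<i> * A$j$i + A$j$j"
    by (simp only: sesq_expand sesq_smult_left sesq_smult_right sesq_axis_axis) (simp add: algebra_simps)
  then have 2: "Re (A$i$j) - Re (A$j$i) = 0" using p[of "1 *s ?x + \<i> *s ?y"] d[of i] d[of j] by simp
  show ?thesis using 1 2 by (simp add: complex_eq_iff)
qed

lemma psd_diag: "psd_mat A \<Longrightarrow> nonneg_real (A$k$k)"
  by (metis sesq_axis_axis psd_nonneg_real)

lemma psd_trace:
  assumes "psd_mat A"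
  shows "mat_trace A = of_real (Re (mat_trace A))" and "Re (A$k$k) \<le> Re (mat_trace A)"
proof -
  have d: "\<And>k. Im (A$k$k) = 0 \<and> Re (A$k$k) \<ge> 0"
    using psd_diag[OF assms] by (simp add: nonneg_real_def)
  then show "mat_trace A = of_real (Re (mat_trace A))"
    by (simp add: mat_trace_def complex_eq_iff Im_sum)
  show "Re (A$k$k) \<le> Re (mat_trace A)"
    unfolding mat_trace_def Re_sum by (rule member_le_sum) (use d in auto)
qed

lemma psd_scaleR: "psd_mat A \<Longrightarrow> r \<ge> 0 \<Longrightarrow> psd_mat (r *\<^sub>R A)"
  by (simp add: psd_iff sesq_scaleR)

lemma psd_trace_zero:
  assumes "psd_mat A" "mat_trace A = 0"
  shows "A = 0"
proof -
  have "A$k$k = 0" for k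
    using nonneg_real_sum_zero[of UNIV "\<lambda>k. A$k$k" k] psd_diag[OF assms(1)] assms(2)
    by (simp add: mat_trace_def)
  then have "A$k$l = 0" for k l
    using psd_null_vector[OF assms(1)] sesq_axis_axis by metis
  then show ?thesis by (simp add: vec_eq_iff)
qed

section \<open>Rank-one projections and pure states\<close>

text \<open>The standard inner product on C^p (conjugate-linear in the first argument)
  and the rank-one matrix u u*.\<close>
definition cinner :: "complex^'p \<Rightarrow> complex^'p \<Rightarrow> complex" where
  "cinner u y = (\<Sum>l\<in>UNIV. cnj (u$l) * y$l)"

definition outer :: "complex^'p \<Rightarrow> complex^'p^'p" where
  "outer u = (\<chi> k l. u$k * cnj (u$l))"

lemma cinner_add: "cinner u (x + y) = cinner u x + cinner u y"
  by (simp add: cinner_def algebra_simps sum.distrib)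
lemma cinner_diff: "cinner u (x - y) = cinner u x - cinner u y"
  by (simp add: cinner_def algebra_simps sum_subtractf)
lemma cinner_smult: "cinner u (c *s y) = c * cinner u y"
  by (simp add: cinner_def algebra_simps sum_distrib_left)
lemma cinner_add_left: "cinner (x + y) u = cinner x u + cinner y u"
  by (simp add: cinner_def algebra_simps sum.distrib)
lemma cinner_diff_left: "cinner (x - y) u = cinner x u - cinner y u"
  by (simp add: cinner_def algebra_simps sum_subtractf)
lemma cinner_smult_left: "cinner (c *s y) u = cnj c * cinner y u"
  by (simp add: cinner_def algebra_simps sum_distrib_left)
lemma cinner_commute: "cinner y x = cnj (cinner x y)"
  by (simp add: cinner_def mult.commute)

lemma cinner_axis: "cinner u (axis k 1) = cnj (u$k)"
proof -
  have "cinner u (axis k 1) = (\<Sum>l\<in>UNIV. if l = k then cnj (u$l) else 0)"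
    unfolding cinner_def by (rule sum.cong) (auto simp: axis_def)
  then show ?thesis by simp
qed

lemma cinner_self: "cinner x x = of_real (\<Sum>k\<in>UNIV. (cmod (x$k))\<^sup>2)"
  by (simp only: cinner_def of_real_sum complex_norm_square) (simp add: mult.commute)

lemma cinner_self_nonneg_real: "nonneg_real (cinner x x)"
  by (simp add: cinner_self nonneg_real_def sum_nonneg)

lemma cinner_self_zero:
  assumes "cinner x x = 0" shows "x = 0"
proof -
  have "(\<Sum>k\<in>UNIV. (cmod (x$k))\<^sup>2) = 0"
    using assms cinner_self[of x] by (metis of_real_eq_0_iff)
  then have "\<And>k. (cmod (x$k))\<^sup>2 = 0" by (simp add: sum_nonneg_eq_0_iff)
  then show ?thesis by (simp add: vec_eq_iff)
qed

lemma sesq_outer: "sesq x (outer u) y = cnj (cinner u x) * cinner u y"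
proof -
  have "sesq x (outer u) y = (\<Sum>k\<in>UNIV. \<Sum>l\<in>UNIV. (cnj (x$k) * u$k) * (cnj (u$l) * y$l))"
    by (simp add: sesq_def outer_def mult_ac)
  also have "\<dots> = (\<Sum>k\<in>UNIV. cnj (x$k) * u$k) * (\<Sum>l\<in>UNIV. cnj (u$l) * y$l)"
    by (simp add: sum_product)
  finally show ?thesis by (simp add: cinner_def mult_ac)
qed

lemma trace_outer: "mat_trace (outer u) = cinner u u"
  by (simp add: mat_trace_def outer_def cinner_def mult_ac)

lemma outer_state: "cinner w w = of_real r \<Longrightarrow> r > 0 \<Longrightarrow> (1 / r) *\<^sub>R outer w \<in> state_space"
  unfolding state_space_def
  by (auto simp: psd_iff sesq_scaleR sesq_outer trace_scaleR trace_outer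
      complex_norm_square[symmetric] simp del: of_real_power)

lemma outer_phase: "cmod c = 1 \<Longrightarrow> outer (c *s v) = outer v"
proof -
  assume "cmod c = 1"
  then have "c * cnj c = 1" by (simp add: complex_norm_square[symmetric])
  then show ?thesis by (simp add: outer_def vec_eq_iff)
qed

lemma state_eq_outer:
  fixes \<rho> :: "complex^'p^'p"
  assumes rho: "\<rho> \<in> state_space" and unit: "cinner u u = 1"
    and null: "\<And>x. sesq x (outer u) x = 0 \<Longrightarrow> sesq x \<rho> x = 0"
  shows "\<rho> = outer u"
proof -
  have psd: "psd_mat \<rho>" and tr: "mat_trace \<rho> = 1" using rho by (auto simp: state_space_def)
  define perp where "perp a = a - cinner u a *s u" for a :: "complex^'p"
  have z: "sesq (perp a) \<rho> y = 0 \<and> sesq y \<rho> (perp a) = 0" for a y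
  proof (rule psd_null_vector[OF psd], rule null)
    show "sesq (perp a) (outer u) (perp a) = 0"
      by (simp add: sesq_outer perp_def cinner_diff cinner_smult unit)
  qed
  have dec: "a = perp a + cinner u a *s u" for a by (simp add: perp_def)
  define m where "m = sesq u \<rho> u"
  have ent: "\<rho>$k$l = u$k * cnj (u$l) * m" for k l
  proof -
    have "\<rho>$k$l = sesq (perp (axis k 1) + cinner u (axis k 1) *s u) \<rho> (axis l 1)"
      using dec[of "axis k 1"] by (simp add: sesq_axis_axis)
    also have "\<dots> = u$k * sesq u \<rho> (perp (axis l 1) + cinner u (axis l 1) *s u)"
      using dec[of "axis l 1"] by (simp add: sesq_add_left sesq_smult_left z cinner_axis)
    also have "\<dots> = u$k * cnj (u$l) * m"
      by (simp add: sesq_add_right sesq_smult_right z cinner_axis m_def)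
    finally show ?thesis .
  qed
  have "1 = (\<Sum>k\<in>UNIV. u$k * cnj (u$k)) * m"
    using tr by (simp add: mat_trace_def ent sum_distrib_right)
  also have "(\<Sum>k\<in>UNIV. u$k * cnj (u$k)) = 1" using unit by (simp add: cinner_def mult_ac)
  finally have "m = 1" by simp
  then show ?thesis by (simp add: vec_eq_iff ent outer_def)
qed

text \<open>Schur-complement splitting of a psd matrix A along a nonzero diagonal entry
  A_ii: both the rank-one part P = A e_i e_i* A / A_ii and the rest A - P are psd.\<close>
lemma psd_schur_split:
  fixes A :: "complex^'p^'p"
  assumes psd: "psd_mat A" and di: "A$i$i \<noteq> 0"
  defines "P \<equiv> \<chi> k l. A$k$i * A$i$l / A$i$i"
  shows "psd_mat P" and "psd_mat (A - P)"
proof -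
  define e where "e = (axis i 1 :: complex^'p)"
  define d where "d = A$i$i"
  have dpos: "Im d = 0" "Re d > 0"
    using psd_diag[OF psd, of i] di by (auto simp: d_def complex_eq_iff nonneg_real_def)
  have d_real: "d = of_real (Re d)" and cd: "cnj d = d" using dpos by (simp_all add: complex_eq_iff)
  have dnz: "d \<noteq> 0" using di by (simp add: d_def)
  have P_d: "P = (\<chi> k l. A$k$i * A$i$l / d)" by (simp add: P_def d_def)
  have e_sesq_e: "sesq e A e = d" by (simp add: e_def d_def sesq_axis_axis)
  have hx: "sesq e A x = cnj (sesq x A e)" for x
    by (rule sesq_hermitian[OF psd_hermitian[OF psd]])
  have sesqP: "sesq x P x = sesq x A e * sesq e A x / d" for x
  proof -
    have "sesq x P x = (\<Sum>k\<in>UNIV. \<Sum>l\<in>UNIV. (cnj (x$k) * A$k$i) * (A$i$l * x$l) / d)"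
      by (simp add: sesq_def P_d mult_ac)
    also have "\<dots> = (\<Sum>k\<in>UNIV. cnj (x$k) * A$k$i) * (\<Sum>l\<in>UNIV. A$i$l * x$l) / d"
      by (simp add: sum_product sum_divide_distrib)
    finally show ?thesis by (simp add: e_def sesq_axis_left sesq_axis_right)
  qed
  show "psd_mat P"
    unfolding psd_iff
  proof
    fix x
    have "sesq x P x = of_real ((cmod (sesq x A e))\<^sup>2) / of_real (Re d)"
      by (subst d_real[symmetric]) (simp add: sesqP hx complex_norm_square del: of_real_power)
    also have "\<dots> = of_real ((cmod (sesq x A e))\<^sup>2 / Re d)" by simp
    finally have "sesq x P x = of_real ((cmod (sesq x A e))\<^sup>2 / Re d)" .
    then show "Im (sesq x P x) = 0 \<and> Re (sesq x P x) \<ge> 0" using dpos by simp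
  qed
  show "psd_mat (A - P)"
    unfolding psd_iff
  proof
    fix x
    define c where "c = sesq e A x / d"
    have "sesq (x - c *s e) A (x - c *s e)
        = sesq x A x - c * sesq x A e - cnj c * sesq e A x + cnj c * c * d"
      by (simp add: sesq_diff_left sesq_diff_right sesq_smult_left sesq_smult_right
          e_sesq_e algebra_simps)
    also have "\<dots> = sesq x (A - P) x"
      using dnz cd by (simp add: sesq_mat_diff sesqP c_def hx field_simps)
    finally show "Im (sesq x (A - P) x) = 0 \<and> Re (sesq x (A - P) x) \<ge> 0"
      using psd by (metis psd_iff)
  qed
qed

lemma extreme_state_summand:
  fixes \<omega> :: "complex^'p^'p"
  assumes ext: "\<omega> extreme_point_of state_space"
    and P: "psd_mat P" and R: "psd_mat R" and split: "\<omega> = P + R"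
    and pos: "0 < Re (mat_trace P)"
  shows "\<omega> = (1 / Re (mat_trace P)) *\<^sub>R P"
proof -
  define a where "a = Re (mat_trace P)"
  define b where "b = Re (mat_trace R)"
  have tr: "mat_trace \<omega> = 1" using ext by (simp add: extreme_point_of_def state_space_def)
  have trP: "mat_trace P = of_real a" and trR: "mat_trace R = of_real b"
    using psd_trace(1)[OF P] psd_trace(1)[OF R] by (simp_all add: a_def b_def)
  have ab: "a + b = 1" using tr trP trR split by (simp add: mat_trace_def sum.distrib complex_eq_iff)
  have a0: "a > 0" using pos by (simp add: a_def)
  have b0: "b \<ge> 0" using psd_trace(2)[OF R] psd_diag[OF R]
    by (simp add: b_def mat_trace_def Re_sum sum_nonneg nonneg_real_def)
  show ?thesis
  proof (cases "b = 0")
    case True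
    then have "R = 0" using psd_trace_zero[OF R] trR by simp
    then show ?thesis using ab True split by (simp add: a_def)
  next
    case False
    then have b1: "b > 0" using b0 by simp
    define P' where "P' = (1/a) *\<^sub>R P"
    define R' where "R' = (1/b) *\<^sub>R R"
    have P': "P' \<in> state_space" using P a0 trP
      by (simp add: P'_def state_space_def psd_scaleR trace_scaleR)
    have R': "R' \<in> state_space" using R b1 trR
      by (simp add: R'_def state_space_def psd_scaleR trace_scaleR)
    have "(1 - b) / a = 1" using ab a0 by simp
    then have eq: "\<omega> = (1 - b) *\<^sub>R P' + b *\<^sub>R R'"
      using b1 split by (simp add: P'_def R'_def)
    have "P' = R'"
    proof (rule ccontr)
      assume "P' \<noteq> R'"
      then have "\<omega> \<in> open_segment P' R'"
        unfolding in_segment using eq b1 ab a0 by (intro conjI exI[of _ b]) auto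
      then show False using ext P' R' by (simp add: extreme_point_of_def)
    qed
    then show ?thesis using eq by (simp add: P'_def a_def algebra_simps flip: scaleR_add_left)
  qed
qed

lemma pure_state_outer:
  fixes \<omega> :: "complex^'p^'p"
  assumes "pure_state \<omega>"
  shows "\<exists>u. \<omega> = outer u \<and> cinner u u = 1"
proof -
  have ext: "\<omega> extreme_point_of state_space" using assms by (simp add: pure_state_def)
  then have psd: "psd_mat \<omega>" and tr: "mat_trace \<omega> = 1"
    by (auto simp: extreme_point_of_def state_space_def)
  obtain i where di: "\<omega>$i$i \<noteq> 0"
    using tr by (metis (no_types) mat_trace_def sum.neutral zero_neq_one)
  define d where "d = \<omega>$i$i"
  have dpos: "Im d = 0" "Re d > 0"
    using psd_diag[OF psd, of i] di by (auto simp: d_def complex_eq_iff nonneg_real_def)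
  define P where "P = (\<chi> k l. \<omega>$k$i * \<omega>$i$l / \<omega>$i$i :: complex^'p^'p)"
  define a where "a = Re (mat_trace P)"
  have psdP: "psd_mat P" and psdR: "psd_mat (\<omega> - P)"
    using psd_schur_split[OF psd di] by (simp_all add: P_def)
  have "P$i$i = d" using di by (simp add: P_def d_def)
  then have a0: "a > 0" using psd_trace(2)[OF psdP, of i] dpos by (simp add: a_def)
  have om: "\<omega> = (1/a) *\<^sub>R P"
    using extreme_state_summand[OF ext psdP psdR _ a0[unfolded a_def]] by (simp add: a_def)
  define s where "s = sqrt (Re d * a)"
  have s2: "of_real s * of_real s = d * of_real a"
    using dpos a0 by (simp add: s_def complex_eq_iff flip: of_real_mult)
  define u where "u = (\<chi> k. \<omega>$k$i / of_real s :: complex^'p)"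
  have "\<omega>$k$l = u$k * cnj (u$l)" for k l
  proof -
    have "\<omega>$k$l = ((1/a) *\<^sub>R P)$k$l" using om by (rule arg_cong)
    also have "\<dots> = \<omega>$k$i * \<omega>$i$l / (d * of_real a)"
      using a0 unfolding vector_scaleR_component P_def by (simp add: scaleR_conv_of_real d_def)
    also have "\<dots> = \<omega>$k$i * cnj (\<omega>$l$i) / (of_real s * of_real s)"
      using s2 psd_hermitian[OF psd, of l i] by simp
    also have "\<dots> = u$k * cnj (u$l)" by (simp add: u_def)
    finally show ?thesis .
  qed
  then have "\<omega> = outer u" by (simp add: vec_eq_iff outer_def)
  moreover from this have "cinner u u = 1" using tr by (simp add: trace_outer)
  ultimately show ?thesis by blast
qed

lemma pure_state_in: "pure_state \<omega> \<Longrightarrow> \<omega> \<in> state_space"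
  by (simp add: pure_state_def extreme_point_of_def)

lemma pure_state_null_vector:
  assumes "pure_state \<omega>" "A \<in> state_space" "A \<noteq> \<omega>"
  obtains x where "sesq x \<omega> x = 0" and "sesq x A x \<noteq> 0"
proof -
  obtain u where u: "\<omega> = outer u" "cinner u u = 1" using pure_state_outer[OF assms(1)] by blast
  have "A \<noteq> outer u" using u assms(3) by simp
  then show ?thesis using state_eq_outer[OF assms(2) u(2)] that u(1) by blast
qed

section \<open>Product vectors, partial traces and separable states\<close>

definition ptensor :: "complex^'m \<Rightarrow> complex^'n \<Rightarrow> complex^('m \<times> 'n)" where
  "ptensor x w = (\<chi> p. x$(fst p) * w$(snd p))"

lemma sum_UNIV_prod:
  "(\<Sum>p\<in>(UNIV::('a::finite \<times> 'b::finite) set). f p) = (\<Sum>i\<in>UNIV. \<Sum>k\<in>UNIV. f (i,k))"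
  by (simp add: sum.cartesian_product flip: UNIV_Times_UNIV)

lemma sesq_ptensor_kron:
  "sesq (ptensor x w) (kron A B) (ptensor x w) = sesq x A x * sesq w B w"
proof -
  have "sesq (ptensor x w) (kron A B) (ptensor x w) =
     (\<Sum>i\<in>UNIV. \<Sum>k\<in>UNIV. \<Sum>j\<in>UNIV. \<Sum>l\<in>UNIV.
        (cnj (x$i) * A$i$j * x$j) * (cnj (w$k) * B$k$l * w$l))"
    unfolding sesq_def sum_UNIV_prod by (simp add: ptensor_def kron_def mult_ac)
  also have "\<dots> = sesq x A x * sesq w B w"
    unfolding sesq_def sum_product by simp
  finally show ?thesis .
qed

definition ptrace2 :: "complex^('m::finite \<times> 'n::finite)^('m \<times> 'n) \<Rightarrow> complex^'m^'m" where
  "ptrace2 X = (\<chi> a c. \<Sum>b\<in>UNIV. X$(a,b)$(c,b))"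
definition ptrace1 :: "complex^('m::finite \<times> 'n::finite)^('m \<times> 'n) \<Rightarrow> complex^'n^'n" where
  "ptrace1 X = (\<chi> b d. \<Sum>a\<in>UNIV. X$(a,b)$(a,d))"

lemma ptrace2_kron: "mat_trace B = 1 \<Longrightarrow> ptrace2 (kron A B) = A"
  by (simp add: vec_eq_iff ptrace2_def kron_def mat_trace_def flip: sum_distrib_left)
lemma ptrace1_kron: "mat_trace A = 1 \<Longrightarrow> ptrace1 (kron A B) = B"
  by (simp add: vec_eq_iff ptrace1_def kron_def mat_trace_def flip: sum_distrib_right)
lemma ptrace2_comb: "ptrace2 ((1 - s) *\<^sub>R X + s *\<^sub>R Y) = (1 - s) *\<^sub>R ptrace2 X + s *\<^sub>R ptrace2 Y"
  by (simp add: vec_eq_iff ptrace2_def scaleR_sum_right sum.distrib)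
lemma ptrace1_comb: "ptrace1 ((1 - s) *\<^sub>R X + s *\<^sub>R Y) = (1 - s) *\<^sub>R ptrace1 X + s *\<^sub>R ptrace1 Y"
  by (simp add: vec_eq_iff ptrace1_def scaleR_sum_right sum.distrib)

lemma kron_comb_right:
  "kron A ((1 - s) *\<^sub>R X + s *\<^sub>R Y) = (1 - s) *\<^sub>R kron A X + s *\<^sub>R kron A Y"
  by (simp add: vec_eq_iff kron_def) (simp add: scaleR_conv_of_real algebra_simps)
lemma kron_comb_left:
  "kron ((1 - s) *\<^sub>R X + s *\<^sub>R Y) A = (1 - s) *\<^sub>R kron X A + s *\<^sub>R kron Y A"
  by (simp add: vec_eq_iff kron_def) (simp add: scaleR_conv_of_real algebra_simps)

text \<open>The factors of a product of states are recovered by the partial traces.\<close>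
lemma kron_state_inj:
  assumes "A \<in> state_space" "A' \<in> state_space" "B \<in> state_space" "B' \<in> state_space"
    and "kron A B = kron A' B'"
  shows "A = A' \<and> B = B'"
proof -
  have "mat_trace A = 1" "mat_trace A' = 1" "mat_trace B = 1" "mat_trace B' = 1"
    using assms(1-4) by (simp_all add: state_space_def)
  then show ?thesis
    using arg_cong[OF assms(5), of ptrace1] arg_cong[OF assms(5), of ptrace2]
    by (simp add: ptrace1_kron ptrace2_kron)
qed

lemma kron_separable: "A \<in> state_space \<Longrightarrow> B \<in> state_space \<Longrightarrow> kron A B \<in> separable_states"
  unfolding separable_states_def by (rule hull_inc) blast

lemma convex_separable: "convex separable_states"
  unfolding separable_states_def by (rule convex_convex_hull)

lemma separable_decomposition:
  assumes "X \<in> (separable_states :: (complex^('m::finite \<times> 'n::finite)^('m \<times> 'n)) set)"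
  obtains Sf u where "finite Sf"
    and "\<forall>v\<in>Sf. \<exists>A B. v = kron A B \<and> A \<in> (state_space :: (complex^'m^'m) set)
                        \<and> B \<in> (state_space :: (complex^'n^'n) set)"
    and "\<forall>v\<in>Sf. 0 \<le> u v" and "sum u Sf = 1" and "X = (\<Sum>v\<in>Sf. u v *\<^sub>R v)"
proof -
  obtain Sf u where S: "finite Sf"
    "Sf \<subseteq> {kron \<omega> \<sigma> | \<omega> \<sigma>. \<omega> \<in> (state_space :: (complex^'m^'m) set)
                             \<and> \<sigma> \<in> (state_space :: (complex^'n^'n) set)}"
    "\<forall>x\<in>Sf. 0 \<le> u x" "sum u Sf = 1" "(\<Sum>v\<in>Sf. u v *\<^sub>R v) = X"
    using assms unfolding separable_states_def convex_hull_explicit mem_Collect_eq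
    by (elim exE conjE) blast
  from S(2) have "\<forall>v\<in>Sf. \<exists>A B. v = kron A B \<and> A \<in> (state_space :: (complex^'m^'m) set)
                   \<and> B \<in> (state_space :: (complex^'n^'n) set)" by blast
  with S show ?thesis using that by simp
qed

text \<open>Separable states are nonnegative on product vectors (they need not be on all vectors).\<close>
lemma separable_ptensor_nonneg:
  assumes "X \<in> (separable_states :: (complex^('m::finite \<times> 'n::finite)^('m \<times> 'n)) set)"
  shows "nonneg_real (sesq (ptensor x w) X (ptensor x w))"
proof -
  obtain Sf u where S: "finite Sf"
    "\<forall>v\<in>Sf. \<exists>A B. v = kron A B \<and> A \<in> (state_space :: (complex^'m^'m) set)
                   \<and> B \<in> (state_space :: (complex^'n^'n) set)"
    "\<forall>v\<in>Sf. 0 \<le> u v" "X = (\<Sum>v\<in>Sf. u v *\<^sub>R v)"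
    by (rule separable_decomposition[OF assms])
  show ?thesis unfolding S(4) sesq_mat_sum[OF S(1)]
    using S(2,3) by (intro nonneg_real_sum)
      (auto simp: sesq_ptensor_kron nonneg_real_scale nonneg_real_mult state_nonneg_real)
qed

section \<open>Segments that are faces at their midpoint\<close>

definition segment_face :: "'a::real_vector set \<Rightarrow> 'a \<Rightarrow> 'a \<Rightarrow> bool" where
  "segment_face S a b \<longleftrightarrow>
     (\<forall>y\<in>S. \<forall>y'\<in>S. \<forall>t. 0 < t \<and> t < 1 \<and> midpoint a b = (1 - t) *\<^sub>R y + t *\<^sub>R y'
        \<longrightarrow> y \<in> closed_segment a b)"

lemma midpoint_comb: "midpoint a b = (1 - 1/2) *\<^sub>R a + (1/2 :: real) *\<^sub>R b"
  by (simp add: midpoint_def scaleR_add_right)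

lemma affine_iso_comb:
  "affine_iso f S T \<Longrightarrow> x \<in> S \<Longrightarrow> y \<in> S \<Longrightarrow> 0 \<le> t \<Longrightarrow> t \<le> 1 \<Longrightarrow>
     f ((1 - t) *\<^sub>R x + t *\<^sub>R y) = (1 - t) *\<^sub>R f x + t *\<^sub>R f y"
  by (simp add: affine_iso_def)

lemma segment_face_image:
  assumes f: "affine_iso f S T" and cS: "convex S" and ab: "a \<in> S" "b \<in> S"
    and face: "segment_face S a b"
  shows "segment_face T (f a) (f b)"
  unfolding segment_face_def
proof (intro ballI allI impI, elim conjE)
  fix y y' t assume yy: "y \<in> T" "y' \<in> T" "0 < t" "t < 1"
    and mid: "midpoint (f a) (f b) = (1 - t) *\<^sub>R y + t *\<^sub>R y'"
  have bij: "bij_betw f S T" using f by (simp add: affine_iso_def)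
  obtain x where x: "x \<in> S" "y = f x" using yy(1) bij by (metis bij_betw_imp_surj_on imageE)
  obtain x' where x': "x' \<in> S" "y' = f x'" using yy(2) bij by (metis bij_betw_imp_surj_on imageE)
  have m: "midpoint a b \<in> S" using cS ab by (simp add: midpoint_comb convex_def)
  have c: "(1 - t) *\<^sub>R x + t *\<^sub>R x' \<in> S" using cS x(1) x'(1) yy(3,4) by (simp add: convex_def)
  have "f (midpoint a b) = midpoint (f a) (f b)"
    unfolding midpoint_comb by (rule affine_iso_comb[OF f ab]) auto
  also have "\<dots> = f ((1 - t) *\<^sub>R x + t *\<^sub>R x')"
    using mid x x' yy(3,4) affine_iso_comb[OF f x(1) x'(1), of t] by simp
  finally have "midpoint a b = (1 - t) *\<^sub>R x + t *\<^sub>R x'"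
    using bij m c by (simp add: bij_betw_def inj_on_def)
  then have "x \<in> closed_segment a b"
    using face x(1) x'(1) yy(3,4) unfolding segment_face_def by blast
  then obtain s where s: "0 \<le> s" "s \<le> 1" "x = (1 - s) *\<^sub>R a + s *\<^sub>R b"
    by (auto simp: in_segment)
  have "y = (1 - s) *\<^sub>R f a + s *\<^sub>R f b" using x(2) s affine_iso_comb[OF f ab, of s] by simp
  then show "y \<in> closed_segment (f a) (f b)" using s(1,2) by (auto simp: in_segment)
qed

lemma affine_iso_inverse:
  assumes f: "affine_iso f S T" and cS: "convex S"
  shows "affine_iso (inv_into S f) T S"
proof -
  have bij: "bij_betw f S T" using f by (simp add: affine_iso_def)
  have "inv_into S f ((1 - t) *\<^sub>R x + t *\<^sub>R y) = (1 - t) *\<^sub>R inv_into S f x + t *\<^sub>R inv_into S f y"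
    if xy: "x \<in> T" "y \<in> T" "0 \<le> t" "t \<le> 1" for x y t
  proof -
    let ?g = "inv_into S f"
    have gx: "?g x \<in> S" "f (?g x) = x" and gy: "?g y \<in> S" "f (?g y) = y"
      using bij xy(1,2) by (auto simp: bij_betw_def inv_into_into f_inv_into_f)
    have c: "(1 - t) *\<^sub>R ?g x + t *\<^sub>R ?g y \<in> S"
      using cS gx(1) gy(1) xy(3,4) by (simp add: convex_def)
    have "f ((1 - t) *\<^sub>R ?g x + t *\<^sub>R ?g y) = (1 - t) *\<^sub>R x + t *\<^sub>R y"
      using affine_iso_comb[OF f gx(1) gy(1) xy(3,4)] gx gy by simp
    then show ?thesis using c bij by (metis bij_betw_def inv_into_f_f)
  qed
  then show ?thesis using bij_betw_inv_into[OF bij] by (simp add: affine_iso_def)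
qed

lemma segment_face_affine_iso:
  assumes f: "affine_iso f S T" and cS: "convex S" and cT: "convex T" and ab: "a \<in> S" "b \<in> S"
  shows "segment_face T (f a) (f b) \<longleftrightarrow> segment_face S a b"
proof
  assume "segment_face T (f a) (f b)"
  moreover have bij: "bij_betw f S T" using f by (simp add: affine_iso_def)
  ultimately have "segment_face S (inv_into S f (f a)) (inv_into S f (f b))"
    using ab by (intro segment_face_image[OF affine_iso_inverse[OF f cS] cT])
      (auto simp: bij_betw_def)
  then show "segment_face S a b" using bij ab by (simp add: bij_betw_def inv_into_f_f)
qed (rule segment_face_image[OF f cS ab])

section \<open>Two distinct pure states: a chord of the Bloch sphere\<close>

lemma distinct_pure_states_aligned:
  fixes \<sigma> \<sigma>' :: "complex^'n::finite^'n"
  assumes "pure_state \<sigma>" "pure_state \<sigma>'" "\<sigma> \<noteq> \<sigma>'"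
  obtains v v' and c :: real where "\<sigma> = outer v" "\<sigma>' = outer v'"
    "cinner v v = 1" "cinner v' v' = 1" "cinner v v' = of_real c" "0 \<le> c" "c < 1"
proof -
  obtain v where v: "\<sigma> = outer v" "cinner v v = 1" using pure_state_outer[OF assms(1)] by blast
  obtain v0 where v0: "\<sigma>' = outer v0" "cinner v0 v0 = 1" using pure_state_outer[OF assms(2)] by blast
  define c0 where "c0 = cinner v v0"
  define ph where "ph = (if c0 = 0 then 1 else cnj c0 / of_real (cmod c0))"
  define v' where "v' = ph *s v0"
  define c where "c = cmod c0"
  have ph1: "cmod ph = 1" by (simp add: ph_def norm_divide)
  have s': "\<sigma>' = outer v'" using v0 ph1 by (simp add: v'_def outer_phase)
  have vv': "cinner v v' = of_real c"
  proof (cases "c0 = 0")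
    case True then show ?thesis by (simp add: v'_def cinner_smult ph_def c_def c0_def)
  next
    case False
    have "cnj c0 * c0 = of_real (cmod c0) * of_real (cmod c0)"
      by (simp only: complex_norm_square[symmetric] of_real_mult[symmetric] power2_eq_square mult.commute)
    then have "ph * c0 = of_real (cmod c0)" using False by (simp add: ph_def)
    then show ?thesis by (simp add: v'_def cinner_smult c0_def c_def mult.commute)
  qed
  have v'v: "cinner v' v = of_real c" using vv' by (simp add: cinner_commute[of v' v])
  have v'v': "cinner v' v' = 1"
    using v0 ph1 by (simp add: v'_def cinner_smult cinner_smult_left mult.assoc
        complex_norm_square[symmetric] flip: mult.assoc)
  have dd: "cinner (v - v') (v - v') = of_real (2 - 2 * c)"
    by (simp add: cinner_diff cinner_diff_left v(2) vv' v'v v'v')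
  have "c < 1"
  proof (rule ccontr)
    assume "\<not> c < 1"
    moreover have "Re (cinner (v - v') (v - v')) \<ge> 0"
      using cinner_self_nonneg_real[of "v - v'"] by (simp add: nonneg_real_def)
    ultimately have "c = 1" using dd by simp
    then have "v - v' = 0" using dd by (intro cinner_self_zero) simp
    then show False using assms(3) v(1) s' by simp
  qed
  then show ?thesis using that v s' v'v' vv' by (simp add: c_def)
qed

text \<open>With v, v' aligned as above, the midpoint of v v* and v' v'* is also a proper
  convex combination of the pure states along v + v' and v - v'.  The first of them
  lies off the segment: v - v' is null for it, but not for any point of the segment.\<close>
lemma midpoint_decomposition_off_segment:
  fixes \<sigma> \<sigma>' :: "complex^'n::finite^'n"
  assumes "pure_state \<sigma>" "pure_state \<sigma>'" "\<sigma> \<noteq> \<sigma>'"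
  obtains \<tau> \<tau>' t where "\<tau> \<in> state_space" "\<tau>' \<in> state_space" "0 < t" "t < 1"
    "midpoint \<sigma> \<sigma>' = (1 - t) *\<^sub>R \<tau> + t *\<^sub>R \<tau>'" "\<tau> \<notin> closed_segment \<sigma> \<sigma>'"
proof -
  obtain v v' and c :: real where v: "\<sigma> = outer v" "\<sigma>' = outer v'"
    "cinner v v = 1" "cinner v' v' = 1" and vv': "cinner v v' = of_real c" and c: "0 \<le> c" "c < 1"
    using distinct_pure_states_aligned[OF assms] by blast
  have v'v: "cinner v' v = of_real c" using vv' by (simp add: cinner_commute[of v' v])
  define wp where "wp = v + v'"
  define wm where "wm = v - v'"
  have wp_norm: "cinner wp wp = of_real (2 + 2 * c)"
    by (simp add: wp_def cinner_add cinner_add_left v vv' v'v)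
  have wm_norm: "cinner wm wm = of_real (2 - 2 * c)"
    by (simp add: wm_def cinner_diff cinner_diff_left v vv' v'v)
  define \<tau> where "\<tau> = (1 / (2 + 2 * c)) *\<^sub>R outer wp"
  define \<tau>' where "\<tau>' = (1 / (2 - 2 * c)) *\<^sub>R outer wm"
  define t where "t = (1 - c) / 2"
  have "\<tau> \<in> state_space" unfolding \<tau>_def by (rule outer_state[OF wp_norm]) (use c in simp)
  moreover have "\<tau>' \<in> state_space" unfolding \<tau>'_def by (rule outer_state[OF wm_norm]) (use c in simp)
  moreover have t: "0 < t" "t < 1" using c by (auto simp: t_def)
  moreover have "midpoint \<sigma> \<sigma>' = (1 - t) *\<^sub>R \<tau> + t *\<^sub>R \<tau>'"
  proof -
    have "(1 - t) * (1 / (2 + 2 * c)) = 1/4" "t * (1 / (2 - 2 * c)) = 1/4"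
      using c by (simp_all add: t_def field_simps)
    then have "(1 - t) *\<^sub>R \<tau> + t *\<^sub>R \<tau>' = (1/4) *\<^sub>R outer wp + (1/4) *\<^sub>R outer wm"
      by (simp only: \<tau>_def \<tau>'_def scaleR_scaleR)
    also have "\<dots> = midpoint \<sigma> \<sigma>'"
      by (simp add: vec_eq_iff midpoint_def v(1,2) outer_def wp_def wm_def)
        (simp add: scaleR_conv_of_real algebra_simps)
    finally show ?thesis by simp
  qed
  moreover have "\<tau> \<notin> closed_segment \<sigma> \<sigma>'"
  proof
    assume "\<tau> \<in> closed_segment \<sigma> \<sigma>'"
    then obtain s where s: "\<tau> = (1 - s) *\<^sub>R \<sigma> + s *\<^sub>R \<sigma>'" by (auto simp: in_segment)
    have "cinner wp wm = 0" by (simp add: wp_def wm_def cinner_add_left cinner_diff v vv' v'v)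
    then have null: "sesq wm \<tau> wm = 0" by (simp add: \<tau>_def sesq_scaleR sesq_outer)
    have a1: "cinner v wm = of_real (1 - c)" and a2: "cinner v' wm = - of_real (1 - c)"
      by (simp_all add: wm_def cinner_diff v vv' v'v)
    have "sesq wm \<tau> wm = of_real ((1 - s) * (1 - c)^2 + s * (1 - c)^2)"
      unfolding s sesq_mat_add sesq_scaleR v(1,2) sesq_outer a1 a2
      by (simp add: power2_eq_square algebra_simps)
    also have "\<dots> = of_real ((1 - c)^2)" by (simp add: algebra_simps)
    finally show False using null c by simp
  qed
  ultimately show ?thesis using that by blast
qed

text \<open>If the two products share their first factor, the segment is not a face:
  the off-segment decomposition of the second factors lifts to the product.\<close>
lemma not_segment_face_same_first:
  fixes \<omega> :: "complex^'m::finite^'m" and \<sigma> \<sigma>' :: "complex^'n::finite^'n"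
  assumes om: "\<omega> \<in> state_space" and "pure_state \<sigma>" "pure_state \<sigma>'" "\<sigma> \<noteq> \<sigma>'"
  shows "\<not> segment_face separable_states (kron \<omega> \<sigma>) (kron \<omega> \<sigma>')"
proof
  assume face: "segment_face separable_states (kron \<omega> \<sigma>) (kron \<omega> \<sigma>')"
  obtain \<tau> \<tau>' t where b: "\<tau> \<in> state_space" "\<tau>' \<in> state_space" "0 < t" "t < 1"
     "midpoint \<sigma> \<sigma>' = (1 - t) *\<^sub>R \<tau> + t *\<^sub>R \<tau>'" "\<tau> \<notin> closed_segment \<sigma> \<sigma>'"
    by (rule midpoint_decomposition_off_segment[OF assms(2-4)])
  have "midpoint (kron \<omega> \<sigma>) (kron \<omega> \<sigma>') = kron \<omega> (midpoint \<sigma> \<sigma>')"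
    by (simp only: midpoint_comb kron_comb_right)
  also have "\<dots> = (1 - t) *\<^sub>R kron \<omega> \<tau> + t *\<^sub>R kron \<omega> \<tau>'"
    by (simp only: b(5) kron_comb_right)
  finally have "kron \<omega> \<tau> \<in> closed_segment (kron \<omega> \<sigma>) (kron \<omega> \<sigma>')"
    using face kron_separable[OF om b(1)] kron_separable[OF om b(2)] b(3,4)
    unfolding segment_face_def by blast
  then obtain s where s: "0 \<le> s" "s \<le> 1" "kron \<omega> \<tau> = (1 - s) *\<^sub>R kron \<omega> \<sigma> + s *\<^sub>R kron \<omega> \<sigma>'"
    by (auto simp: in_segment)
  have tr: "mat_trace \<omega> = 1" using om by (simp add: state_space_def)
  have "\<tau> = (1 - s) *\<^sub>R \<sigma> + s *\<^sub>R \<sigma>'"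
    using arg_cong[OF s(3), of ptrace1] tr by (simp only: ptrace1_comb ptrace1_kron)
  then show False using b(6) s(1,2) by (auto simp: in_segment)
qed

lemma not_segment_face_same_second:
  fixes \<sigma> :: "complex^'n::finite^'n" and \<omega> \<omega>' :: "complex^'m::finite^'m"
  assumes sg: "\<sigma> \<in> state_space" and "pure_state \<omega>" "pure_state \<omega>'" "\<omega> \<noteq> \<omega>'"
  shows "\<not> segment_face separable_states (kron \<omega> \<sigma>) (kron \<omega>' \<sigma>)"
proof
  assume face: "segment_face separable_states (kron \<omega> \<sigma>) (kron \<omega>' \<sigma>)"
  obtain \<tau> \<tau>' t where b: "\<tau> \<in> state_space" "\<tau>' \<in> state_space" "0 < t" "t < 1"
     "midpoint \<omega> \<omega>' = (1 - t) *\<^sub>R \<tau> + t *\<^sub>R \<tau>'" "\<tau> \<notin> closed_segment \<omega> \<omega>'"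
    by (rule midpoint_decomposition_off_segment[OF assms(2-4)])
  have "midpoint (kron \<omega> \<sigma>) (kron \<omega>' \<sigma>) = kron (midpoint \<omega> \<omega>') \<sigma>"
    by (simp only: midpoint_comb kron_comb_left)
  also have "\<dots> = (1 - t) *\<^sub>R kron \<tau> \<sigma> + t *\<^sub>R kron \<tau>' \<sigma>"
    by (simp only: b(5) kron_comb_left)
  finally have "kron \<tau> \<sigma> \<in> closed_segment (kron \<omega> \<sigma>) (kron \<omega>' \<sigma>)"
    using face kron_separable[OF b(1) sg] kron_separable[OF b(2) sg] b(3,4)
    unfolding segment_face_def by blast
  then obtain s where s: "0 \<le> s" "s \<le> 1" "kron \<tau> \<sigma> = (1 - s) *\<^sub>R kron \<omega> \<sigma> + s *\<^sub>R kron \<omega>' \<sigma>"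
    by (auto simp: in_segment)
  have tr: "mat_trace \<sigma> = 1" using sg by (simp add: state_space_def)
  have "\<tau> = (1 - s) *\<^sub>R \<omega> + s *\<^sub>R \<omega>'"
    using arg_cong[OF s(3), of ptrace2] tr by (simp only: ptrace2_comb ptrace2_kron)
  then show False using b(6) s(1,2) by (auto simp: in_segment)
qed

section \<open>Products with both factors different span a face\<close>

lemma separable_comb_null:
  assumes "y \<in> separable_states" "y' \<in> separable_states" "0 < t" "t < 1"
    and "sesq (ptensor x w) ((1 - t) *\<^sub>R y + t *\<^sub>R y') (ptensor x w) = 0"
  shows "sesq (ptensor x w) y (ptensor x w) = 0"
  using assms(5) separable_ptensor_nonneg[OF assms(1)] separable_ptensor_nonneg[OF assms(2)] assms(3,4)
  by (simp only: sesq_mat_add sesq_scaleR) (blast intro: nonneg_real_comb_zero)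

text \<open>A product of states A (x) B annihilated by the product vectors x (x) w with x, w
  null for w, s' (or for w', s) is w (x) s or w' (x) s': pure states are detected by
  their null vectors, so A = w or B = s', and A = w' or B = s.\<close>
lemma product_null_on_products:
  fixes \<omega> \<omega>' :: "complex^'m::finite^'m" and \<sigma> \<sigma>' :: "complex^'n::finite^'n"
  assumes "pure_state \<omega>" "pure_state \<omega>'" "\<omega> \<noteq> \<omega>'"
    and "pure_state \<sigma>" "pure_state \<sigma>'" "\<sigma> \<noteq> \<sigma>'"
    and AB: "A \<in> state_space" "B \<in> state_space"
    and null: "\<And>x w. (sesq x \<omega> x = 0 \<and> sesq w \<sigma>' w = 0) \<or> (sesq x \<omega>' x = 0 \<and> sesq w \<sigma> w = 0)
                 \<Longrightarrow> sesq x A x * sesq w B w = 0"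
  shows "kron A B \<in> {kron \<omega> \<sigma>, kron \<omega>' \<sigma>'}"
proof -
  have "A = \<omega> \<or> B = \<sigma>'"
  proof (rule ccontr)
    assume "\<not> ?thesis"
    then obtain x w where "sesq x \<omega> x = 0" "sesq x A x \<noteq> 0" "sesq w \<sigma>' w = 0" "sesq w B w \<noteq> 0"
      using pure_state_null_vector[OF assms(1) AB(1)] pure_state_null_vector[OF assms(5) AB(2)]
      by metis
    then show False using null[of x w] by simp
  qed
  moreover have "A = \<omega>' \<or> B = \<sigma>"
  proof (rule ccontr)
    assume "\<not> ?thesis"
    then obtain x w where "sesq x \<omega>' x = 0" "sesq x A x \<noteq> 0" "sesq w \<sigma> w = 0" "sesq w B w \<noteq> 0"
      using pure_state_null_vector[OF assms(2) AB(1)] pure_state_null_vector[OF assms(4) AB(2)]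
      by metis
    then show False using null[of x w] by simp
  qed
  ultimately show ?thesis using assms(3,6) by auto
qed

text \<open>Consequently a separable state with these null vectors is a mixture of
  w (x) s and w' (x) s' only: each summand of positive weight inherits them.\<close>
lemma separable_null_on_products:
  fixes \<omega> \<omega>' :: "complex^'m::finite^'m" and \<sigma> \<sigma>' :: "complex^'n::finite^'n"
  assumes pure: "pure_state \<omega>" "pure_state \<omega>'" "\<omega> \<noteq> \<omega>'"
      "pure_state \<sigma>" "pure_state \<sigma>'" "\<sigma> \<noteq> \<sigma>'"
    and y: "y \<in> separable_states"
    and null: "\<And>x w. (sesq x \<omega> x = 0 \<and> sesq w \<sigma>' w = 0) \<or> (sesq x \<omega>' x = 0 \<and> sesq w \<sigma> w = 0)
                 \<Longrightarrow> sesq (ptensor x w) y (ptensor x w) = 0"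
  shows "y \<in> closed_segment (kron \<omega> \<sigma>) (kron \<omega>' \<sigma>')"
proof -
  obtain Sf u where S: "finite Sf"
    "\<forall>v\<in>Sf. \<exists>A B. v = kron A B \<and> A \<in> (state_space :: (complex^'m^'m) set)
                   \<and> B \<in> (state_space :: (complex^'n^'n) set)"
    "\<forall>v\<in>Sf. 0 \<le> u v" "sum u Sf = 1" "y = (\<Sum>v\<in>Sf. u v *\<^sub>R v)"
    by (rule separable_decomposition[OF y])
  have summands: "v \<in> {kron \<omega> \<sigma>, kron \<omega>' \<sigma>'}" if v: "v \<in> Sf" "u v \<noteq> 0" for v
  proof -
    obtain A B where AB: "v = kron A B" "A \<in> (state_space :: (complex^'m^'m) set)"
      "B \<in> (state_space :: (complex^'n^'n) set)"
      using S(2) v(1) by blast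
    show ?thesis unfolding AB(1)
    proof (rule product_null_on_products[OF pure AB(2,3)])
      fix x w
      assume "(sesq x \<omega> x = 0 \<and> sesq w \<sigma>' w = 0) \<or> (sesq x \<omega>' x = 0 \<and> sesq w \<sigma> w = 0)"
      then have "(\<Sum>v\<in>Sf. of_real (u v) * sesq (ptensor x w) v (ptensor x w)) = 0"
        using null S(5) sesq_mat_sum[OF S(1)] by simp
      then have "of_real (u v) * sesq (ptensor x w) v (ptensor x w) = 0"
        by (rule nonneg_real_sum_zero[OF S(1) _ _ v(1), rotated])
          (use S(2,3) in \<open>auto simp: sesq_ptensor_kron nonneg_real_scale nonneg_real_mult state_nonneg_real\<close>)
      then show "sesq x A x * sesq w B w = 0" using v(2) AB(1) by (simp add: sesq_ptensor_kron)
    qed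
  qed
  have "y = (\<Sum>v\<in>Sf. u v *\<^sub>R (if u v = 0 then kron \<omega> \<sigma> else v))"
    unfolding S(5) by (rule sum.cong) auto
  also have "\<dots> \<in> convex hull {kron \<omega> \<sigma>, kron \<omega>' \<sigma>'}"
    by (rule convex_sum[OF S(1) convex_convex_hull S(4)])
      (use S(3) summands in \<open>auto intro: hull_inc\<close>)
  finally show ?thesis by (simp add: segment_convex_hull)
qed

lemma segment_face_distinct_factors:
  fixes \<omega> \<omega>' :: "complex^'m::finite^'m" and \<sigma> \<sigma>' :: "complex^'n::finite^'n"
  assumes "pure_state \<omega>" "pure_state \<omega>'" "\<omega> \<noteq> \<omega>'"
    and "pure_state \<sigma>" "pure_state \<sigma>'" "\<sigma> \<noteq> \<sigma>'"
  shows "segment_face separable_states (kron \<omega> \<sigma>) (kron \<omega>' \<sigma>')"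
  unfolding segment_face_def
proof (intro ballI allI impI, elim conjE)
  fix y y' t assume yy: "y \<in> separable_states" "y' \<in> separable_states" "0 < t" "t < 1"
    and mid: "midpoint (kron \<omega> \<sigma>) (kron \<omega>' \<sigma>') = (1 - t) *\<^sub>R y + t *\<^sub>R y'"
  show "y \<in> closed_segment (kron \<omega> \<sigma>) (kron \<omega>' \<sigma>')"
  proof (rule separable_null_on_products[OF assms yy(1)])
    fix x w assume "(sesq x \<omega> x = 0 \<and> sesq w \<sigma>' w = 0) \<or> (sesq x \<omega>' x = 0 \<and> sesq w \<sigma> w = 0)"
    then have "sesq (ptensor x w) (midpoint (kron \<omega> \<sigma>) (kron \<omega>' \<sigma>')) (ptensor x w) = 0"
      by (auto simp: midpoint_comb sesq_mat_add sesq_scaleR sesq_ptensor_kron)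
    then show "sesq (ptensor x w) y (ptensor x w) = 0"
      using separable_comb_null[OF yy] mid by simp
  qed
qed

lemma segment_face_pure_products_iff:
  fixes \<omega> \<omega>' :: "complex^'m::finite^'m" and \<sigma> \<sigma>' :: "complex^'n::finite^'n"
  assumes "pure_state \<omega>" "pure_state \<omega>'" "pure_state \<sigma>" "pure_state \<sigma>'"
    and "\<omega> \<noteq> \<omega>' \<or> \<sigma> \<noteq> \<sigma>'"
  shows "segment_face separable_states (kron \<omega> \<sigma>) (kron \<omega>' \<sigma>') \<longleftrightarrow> \<omega> \<noteq> \<omega>' \<and> \<sigma> \<noteq> \<sigma>'"
  using assms segment_face_distinct_factors[OF assms(1,2) _ assms(3,4)]
    not_segment_face_same_first[OF pure_state_in[OF assms(1)] assms(3,4)]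
    not_segment_face_same_second[OF pure_state_in[OF assms(3)] assms(1,2)]
  by auto

section \<open>Affine isomorphisms of separable states\<close>

lemma affine_iso_pure_products:
  fixes \<Phi> :: "complex^('m::finite \<times> 'n::finite)^('m \<times> 'n) \<Rightarrow> complex^('m2::finite \<times> 'n2::finite)^('m2 \<times> 'n2)"
    and \<omega> \<omega>' :: "complex^'m^'m" and \<sigma> \<sigma>' :: "complex^'n^'n"
    and \<rho> \<rho>' :: "complex^'m2^'m2" and \<tau> \<tau>' :: "complex^'n2^'n2"
  assumes f: "affine_iso \<Phi> separable_states separable_states"
    and pure: "pure_state \<omega>" "pure_state \<omega>'" "pure_state \<sigma>" "pure_state \<sigma>'"
      "pure_state \<rho>" "pure_state \<rho>'" "pure_state \<tau>" "pure_state \<tau>'"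
    and img: "\<Phi> (kron \<omega> \<sigma>) = kron \<rho> \<tau>" "\<Phi> (kron \<omega>' \<sigma>') = kron \<rho>' \<tau>'"
    and distinct: "\<omega> \<noteq> \<omega>' \<or> \<sigma> \<noteq> \<sigma>'"
  shows "\<rho> \<noteq> \<rho>' \<and> \<tau> \<noteq> \<tau>' \<longleftrightarrow> \<omega> \<noteq> \<omega>' \<and> \<sigma> \<noteq> \<sigma>'"
proof -
  have states: "\<omega> \<in> state_space" "\<omega>' \<in> state_space" "\<sigma> \<in> state_space" "\<sigma>' \<in> state_space"
    "\<rho> \<in> state_space" "\<rho>' \<in> state_space" "\<tau> \<in> state_space" "\<tau>' \<in> state_space"
    using pure pure_state_in by auto
  have sep: "kron \<omega> \<sigma> \<in> separable_states" "kron \<omega>' \<sigma>' \<in> separable_states"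
    using states by (simp_all add: kron_separable)
  have "kron \<omega> \<sigma> \<noteq> kron \<omega>' \<sigma>'" using distinct kron_state_inj states by blast
  then have "\<Phi> (kron \<omega> \<sigma>) \<noteq> \<Phi> (kron \<omega>' \<sigma>')"
    using f sep by (auto simp: affine_iso_def bij_betw_def inj_on_def)
  then have "\<rho> \<noteq> \<rho>' \<or> \<tau> \<noteq> \<tau>'" using img by auto
  then show ?thesis
    using segment_face_affine_iso[OF f convex_separable convex_separable sep]
      segment_face_pure_products_iff[OF pure(1-4) distinct]
      segment_face_pure_products_iff[OF pure(5-8)] img
    by simp
qed

text \<open>Both factors differ in the pair (w1s1, w2s2) and in (w1s2, w2s1), but only one
  in (w1s1, w2s1) and in (w1s2, w2s2).  Comparing with the prescribed images yields
  rho1 <> rho3 and tau1 <> tau3, then rho1 = rho2 and tau2 = tau3, and finally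
  the contradiction rho1 <> rho2.\<close>
theorem mainTheorem7:
  fixes \<Phi> :: "complex^('m::finite \<times> 'n::finite)^('m \<times> 'n) \<Rightarrow> complex^('m2::finite \<times> 'n2::finite)^('m2 \<times> 'n2)"
    and \<omega>1 \<omega>2 :: "complex^'m^'m" and \<sigma>1 \<sigma>2 :: "complex^'n^'n"
  assumes "affine_iso \<Phi> separable_states separable_states"
    and "pure_state \<omega>1" and "pure_state \<omega>2" and "\<omega>1 \<noteq> \<omega>2"
    and "pure_state \<sigma>1" and "pure_state \<sigma>2" and "\<sigma>1 \<noteq> \<sigma>2"
  shows "\<not> (\<exists>(\<rho>1::complex^'m2^'m2) \<rho>2 \<rho>3 (\<tau>1::complex^'n2^'n2) \<tau>2 \<tau>3.
            pure_state \<rho>1 \<and> pure_state \<rho>2 \<and> pure_state \<rho>3 \<and>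
            pure_state \<tau>1 \<and> pure_state \<tau>2 \<and> pure_state \<tau>3 \<and>
            \<Phi> (kron \<omega>1 \<sigma>1) = kron \<rho>1 \<tau>1 \<and>
            \<Phi> (kron \<omega>1 \<sigma>2) = kron \<rho>1 \<tau>2 \<and>
            \<Phi> (kron \<omega>2 \<sigma>1) = kron \<rho>2 \<tau>3 \<and>
            \<Phi> (kron \<omega>2 \<sigma>2) = kron \<rho>3 \<tau>3)"
proof (intro notI, elim exE conjE)
  fix \<rho>1 \<rho>2 \<rho>3 :: "complex^'m2^'m2" and \<tau>1 \<tau>2 \<tau>3 :: "complex^'n2^'n2"
  assume pure: "pure_state \<rho>1" "pure_state \<rho>2" "pure_state \<rho>3"
      "pure_state \<tau>1" "pure_state \<tau>2" "pure_state \<tau>3"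
    and img: "\<Phi> (kron \<omega>1 \<sigma>1) = kron \<rho>1 \<tau>1" "\<Phi> (kron \<omega>1 \<sigma>2) = kron \<rho>1 \<tau>2"
      "\<Phi> (kron \<omega>2 \<sigma>1) = kron \<rho>2 \<tau>3" "\<Phi> (kron \<omega>2 \<sigma>2) = kron \<rho>3 \<tau>3"
  note products = affine_iso_pure_products[OF assms(1)]
  have diag: "\<rho>1 \<noteq> \<rho>3 \<and> \<tau>1 \<noteq> \<tau>3"
    using products[OF assms(2,3,5,6) pure(1,3,4,6) img(1,4)] assms(4,7) by blast
  have "\<rho>1 = \<rho>2"
    using products[OF assms(2,3,5,5) pure(1,2,4,6) img(1,3)] assms(4) diag by blast
  moreover have "\<tau>2 = \<tau>3"
    using products[OF assms(2,3,6,6) pure(1,3,5,6) img(2,4)] assms(4) diag by blast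
  moreover have "\<rho>1 \<noteq> \<rho>2"
    using products[OF assms(2,3,6,5) pure(1,2,5,6) img(2,3)] assms(4,7) by blast
  ultimately show False by blast
qed

end
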